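(* Let $I=(G,c,F_{\rm in},\mathcal{H},k)$ be a reduced instance of RGBP in which every habitat has at most $6$ vertices and $G$ has maximum degree at most $3$, and let $H\in\mathcal{H}$ with $|H|=6$. If $\{H,H'\}$ is an edge of the basic habitat graph $\mathcal{G}_{G,F_{\rm in},\mathcal{H}}$ for some $H'\in\mathcal{H}$, then $H'\subseteq H$.
   Context: All graphs are finite, simple and undirected. For a graph $G=(V,E)$, $H\subseteq V$ and $F\subseteq E$, let $G[H,F]$ be the graph with vertex set $H$ and edge set $\{\{u,v\}\in F\mid u,v\in H\}$, and $G[H]=G[H,E]$. A graph is 2-connected if it has at least three vertices and remains connected after deleting any single vertex. An instance of RGBP is $(G,c,F_{\rm in},\mathcal{H},k)$ with $G=(V,E)$, costs $c\colon E\to\mathbb{N}_0$, forced edges $F_{\rm in}\subseteq E$, a set $\mathcal{H}$ of subsets of $V$ (habitats) and an integer $k$; the question is whether there is $F$ with $F_{\rm in}\subseteq F\subseteq E$, $\sum_{e\in F}c(e)\leq k$ and $G[H,F]$ 2-connected for all $H\in\mathcal{H}$. The instance is reduced if none of the following rules applies: (1) some $H\in\mathcal{H}$ has $G[H]$ not 2-connected (then answer no); (2) two habitats in $\mathcal{H}$ are equal (delete one); (3) for some habitat $H$ there is an edge $e\in E(G[H])\setminus F_{\rm in}$ such that $G[H]-e$ is not 2-connected (add $e$ to $F_{\rm in}$); (4) some habitat $H$ has $G[H,F_{\rm in}]$ 2-connected (delete $H$); (5) some edge $e\in E$ lies in no $G[H]$, $H\in\mathcal{H}$ (delete $e$, and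 if $e\in F_{\rm in}$ decrease $k$ by $c(e)$). The basic habitat graph $\mathcal{G}_{G,F_{\rm in},\mathcal{H}}$ has vertex set $\mathcal{H}$ and an edge $\{H,H'\}$ whenever $(E(G[H])\cap E(G[H']))\setminus F_{\rm in}\neq\emptyset$. *)

theory Defs
  imports Main
begin

definition simple_graph :: "'a set \<Rightarrow> 'a set set \<Rightarrow> bool" where
  "simple_graph V E \<longleftrightarrow> finite V \<and> (\<forall>e\<in>E. e \<subseteq> V \<and> card e = 2)"

definition edges_in :: "'a set \<Rightarrow> 'a set set \<Rightarrow> 'a set set" where
  "edges_in H F = {e \<in> F. e \<subseteq> H}"

definition adj :: "'a set \<Rightarrow> 'a set set \<Rightarrow> ('a \<times> 'a) set" where
  "adj H F = {(u, v). u \<in> H \<and> v \<in> H \<and> {u, v} \<in> edges_in H F}"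

definition connected_on :: "'a set \<Rightarrow> 'a set set \<Rightarrow> bool" where
  "connected_on H F \<longleftrightarrow> (\<forall>u\<in>H. \<forall>v\<in>H. (u, v) \<in> (adj H F)\<^sup>*)"

text \<open>G[H,F] is 2-connected: at least three vertices and connected after deleting any vertex.
  (Connectedness of G[H,F] itself follows from this when |H| >= 3, but we state it anyway.)\<close>
definition two_connected :: "'a set \<Rightarrow> 'a set set \<Rightarrow> bool" where
  "two_connected H F \<longleftrightarrow> finite H \<and> card H \<ge> 3 \<and> connected_on H F \<and>
     (\<forall>x\<in>H. connected_on (H - {x}) F)"

definition rgbp_instance ::
  "'a set \<Rightarrow> 'a set set \<Rightarrow> ('a set \<Rightarrow> nat) \<Rightarrow> 'a set set \<Rightarrow> 'a set set \<Rightarrow> int \<Rightarrow> bool" where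
  "rgbp_instance V E c Fin Hs k \<longleftrightarrow> simple_graph V E \<and> Fin \<subseteq> E \<and> finite Hs \<and> (\<forall>H\<in>Hs. H \<subseteq> V)"

text \<open>Reduced: none of rules (1)-(5) applies. Rule (2) never applies since habitats form a set.\<close>
definition reduced ::
  "'a set \<Rightarrow> 'a set set \<Rightarrow> ('a set \<Rightarrow> nat) \<Rightarrow> 'a set set \<Rightarrow> 'a set set \<Rightarrow> int \<Rightarrow> bool" where
  "reduced V E c Fin Hs k \<longleftrightarrow>
     (\<forall>H\<in>Hs. two_connected H E) \<and>
     (\<forall>H\<in>Hs. \<forall>e\<in>edges_in H E - Fin. two_connected H (E - {e})) \<and>
     (\<forall>H\<in>Hs. \<not> two_connected H Fin) \<and>
     (\<forall>e\<in>E. \<exists>H\<in>Hs. e \<in> edges_in H E)"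

definition max_degree_le :: "'a set \<Rightarrow> 'a set set \<Rightarrow> nat \<Rightarrow> bool" where
  "max_degree_le V E d \<longleftrightarrow> (\<forall>v\<in>V. card {e \<in> E. v \<in> e} \<le> d)"

text \<open>Edge {H,H'} of the basic habitat graph (simple graph, so H \<noteq> H').\<close>
definition habitat_graph_edge :: "'a set set \<Rightarrow> 'a set set \<Rightarrow> 'a set set \<Rightarrow> 'a set \<Rightarrow> 'a set \<Rightarrow> bool" where
  "habitat_graph_edge E Fin Hs H H' \<longleftrightarrow> H \<in> Hs \<and> H' \<in> Hs \<and> H \<noteq> H' \<and>
     (edges_in H E \<inter> edges_in H' E) - Fin \<noteq> {}"

end

theory Submission
  imports Defs
begin

text \<open>
  Let \<open>{u, v}\<close> be an unforced edge shared by \<open>H\<close> and \<open>H'\<close>. Since \<open>G[H] - uv\<close> and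
  \<open>G[H'] - uv\<close> are still 2-connected, \<open>u\<close> and \<open>v\<close> have three neighbours in \<open>H \<inter> H'\<close>,
  which in a subcubic graph are all their neighbours. Suppose \<open>H' \<notsubseteq> H\<close>; as \<open>|H'| \<le> 6 = |H|\<close>,
  also \<open>H \<notsubseteq> H'\<close>. Let \<open>C = H \<inter> H' - {u, v}\<close>. By 2-connectivity at least two vertices
  of \<open>C\<close> have neighbours in \<open>H - H'\<close>, and two in \<open>H' - H\<close>; with the four edges from \<open>u, v\<close>
  into \<open>C\<close> the degree budget \<open>3|C|\<close> of \<open>C\<close> is at least \<open>8\<close> plus twice the number of edges
  inside \<open>C\<close>. As \<open>|C| \<le> 3\<close>, this forces \<open>|C| = 3\<close>, \<open>H - H' = {z}\<close>, \<open>H' - H = {w}\<close> and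
  \<open>C\<close> independent. Reduction rule (4) yields a second unforced edge in \<open>G[H]\<close>, whose ends
  have three neighbours in \<open>H\<close>; hence some vertex of \<open>C\<close> is adjacent to \<open>u, v, z\<close>, and
  likewise some vertex of \<open>C\<close> to \<open>u, v, w\<close>. These two are then the only neighbours of
  \<open>u\<close> and \<open>v\<close> in \<open>C\<close>, so the third vertex of \<open>C\<close> has at most one neighbour in \<open>H\<close>,
  contradicting 2-connectivity.
\<close>

definition nbrs :: "'a set set \<Rightarrow> 'a \<Rightarrow> 'a set" where
  "nbrs F p = {q. {p, q} \<in> F}"

lemma mem_nbrs_commute: "q \<in> nbrs F p \<longleftrightarrow> p \<in> nbrs F q"
  by (simp add: nbrs_def insert_commute)

lemma connected_on_exit_vertex:
  assumes "connected_on Y F" "a \<in> A" "A \<subseteq> Y" "b \<in> Y - A"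
  shows "\<exists>t\<in>Y - A. nbrs F t \<inter> A \<noteq> {}"
proof (rule ccontr)
  assume no_exit: "\<not> ?thesis"
  have "(a, b) \<in> (adj Y F)\<^sup>*"
    using assms unfolding connected_on_def by blast
  then have "b \<in> A"
  proof (induction rule: rtrancl_induct)
    case base
    show ?case using assms(2) .
  next
    case (step y t)
    then have "t \<in> Y" "y \<in> nbrs F t"
      by (auto simp: adj_def edges_in_def nbrs_def insert_commute)
    with step.IH no_exit show ?case by blast
  qed
  with assms(4) show False by simp
qed

lemma two_connected_two_exit_vertices:
  assumes "two_connected X F" "a \<in> A" "A \<subseteq> X" "b1 \<in> X - A" "b2 \<in> X - A" "b1 \<noteq> b2"
  shows "\<exists>t1 t2. t1 \<noteq> t2 \<and> t1 \<in> X - A \<and> t2 \<in> X - A \<and>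
    nbrs F t1 \<inter> A \<noteq> {} \<and> nbrs F t2 \<inter> A \<noteq> {}"
proof -
  have "connected_on X F" and "\<forall>x\<in>X. connected_on (X - {x}) F"
    using assms(1) unfolding two_connected_def by auto
  obtain t1 where t1: "t1 \<in> X - A" "nbrs F t1 \<inter> A \<noteq> {}"
    using connected_on_exit_vertex[OF \<open>connected_on X F\<close> assms(2-4)] by blast
  obtain b where b: "b \<in> X - A" "b \<noteq> t1"
    using assms(4-6) by blast
  have "connected_on (X - {t1}) F"
    using \<open>\<forall>x\<in>X. connected_on (X - {x}) F\<close> t1(1) by blast
  then obtain t2 where t2: "t2 \<in> X - {t1} - A" "nbrs F t2 \<inter> A \<noteq> {}"
    using connected_on_exit_vertex[of "X - {t1}" F a A b] assms(2,3) t1(1) b by blast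
  show ?thesis
    using t1 t2 by blast
qed

lemma two_connected_card_nbrs_ge_2:
  assumes "two_connected X F" "p \<in> X"
  shows "2 \<le> card (nbrs F p \<inter> X)"
proof -
  have "finite X" "3 \<le> card X"
    using assms(1) unfolding two_connected_def by auto
  then have "2 \<le> card (X - {p})"
    using assms(2) by simp
  then obtain B where "B \<subseteq> X - {p}" "card B = 2"
    by (rule obtain_subset_with_card_n)
  then obtain b1 b2 where "b1 \<in> X - {p}" "b2 \<in> X - {p}" "b1 \<noteq> b2"
    by (auto simp: card_2_iff)
  then obtain t1 t2 where t: "t1 \<noteq> t2" "t1 \<in> X - {p}" "t2 \<in> X - {p}"
    "nbrs F t1 \<inter> {p} \<noteq> {}" "nbrs F t2 \<inter> {p} \<noteq> {}"
    using two_connected_two_exit_vertices[OF assms(1), of p "{p}"] assms(2) by blast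
  then have "{t1, t2} \<subseteq> nbrs F p \<inter> X"
    by (auto simp: mem_nbrs_commute[of _ F p])
  from card_mono[OF _ this] show ?thesis
    using \<open>finite X\<close> \<open>t1 \<noteq> t2\<close> by simp
qed

lemma two_connected_mono:
  assumes "two_connected X F" "\<And>e. e \<in> F \<Longrightarrow> e \<subseteq> X \<Longrightarrow> e \<in> F'"
  shows "two_connected X F'"
proof -
  have "connected_on Y F'" if "Y \<subseteq> X" "connected_on Y F" for Y
  proof -
    have "adj Y F \<subseteq> adj Y F'"
      using assms(2) \<open>Y \<subseteq> X\<close> unfolding adj_def edges_in_def by auto
    with \<open>connected_on Y F\<close> show ?thesis
      unfolding connected_on_def using rtrancl_mono by blast
  qed
  then show ?thesis
    using assms(1) unfolding two_connected_def by blast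
qed

lemma card_nbrs_ge_3_if_two_connected_minus_edge:
  assumes "two_connected X (F - {{p, q}})" "{p, q} \<in> F" "p \<in> X" "q \<in> X"
  shows "3 \<le> card (nbrs F p \<inter> X)"
proof -
  let ?N = "nbrs (F - {{p, q}}) p \<inter> X"
  have "finite X"
    using assms(1) unfolding two_connected_def by blast
  have "2 \<le> card ?N"
    using two_connected_card_nbrs_ge_2[OF assms(1,3)] .
  moreover have "q \<notin> ?N"
    by (simp add: nbrs_def)
  then have "card (insert q ?N) = Suc (card ?N)"
    using \<open>finite X\<close> by simp
  moreover have "insert q ?N \<subseteq> nbrs F p \<inter> X"
    using assms(2,4) by (auto simp: nbrs_def)
  then have "card (insert q ?N) \<le> card (nbrs F p \<inter> X)"
    using \<open>finite X\<close> by (intro card_mono) auto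
  ultimately show ?thesis
    by linarith
qed

lemma sum_card_nbrs_inter_commute:
  assumes "finite A" "finite B"
  shows "(\<Sum>a\<in>A. card (nbrs F a \<inter> B)) = (\<Sum>b\<in>B. card (nbrs F b \<inter> A))"
proof -
  have card_as_sum: "card (nbrs F x \<inter> Y) = (\<Sum>y\<in>Y. of_bool ({x, y} \<in> F))" if "finite Y" for x Y
    using that by (simp add: nbrs_def Int_def conj_commute)
  have "(\<Sum>a\<in>A. card (nbrs F a \<inter> B)) = (\<Sum>a\<in>A. \<Sum>b\<in>B. of_bool ({a, b} \<in> F))"
    using card_as_sum assms(2) by simp
  also have "\<dots> = (\<Sum>b\<in>B. \<Sum>a\<in>A. of_bool ({b, a} \<in> F))"
    by (subst sum.swap) (simp add: insert_commute)
  also have "\<dots> = (\<Sum>b\<in>B. card (nbrs F b \<inter> A))"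
    using card_as_sum assms(1) by simp
  finally show ?thesis .
qed

lemma two_le_sum_card_nbrs_inter:
  assumes "finite T" "finite A" "t1 \<in> T" "t2 \<in> T" "t1 \<noteq> t2"
    "nbrs F t1 \<inter> A \<noteq> {}" "nbrs F t2 \<inter> A \<noteq> {}"
  shows "2 \<le> (\<Sum>t\<in>T. card (nbrs F t \<inter> A))"
proof -
  have "1 \<le> card (nbrs F t1 \<inter> A)" "1 \<le> card (nbrs F t2 \<inter> A)"
    using assms(2,6,7) by (auto simp: Suc_le_eq card_gt_0_iff)
  then have "2 \<le> (\<Sum>t\<in>{t1, t2}. card (nbrs F t \<inter> A))"
    using assms(5) by simp
  also have "\<dots> \<le> (\<Sum>t\<in>T. card (nbrs F t \<inter> A))"
    using assms(1,3,4) by (intro sum_mono2) auto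
  finally show ?thesis .
qed

lemma card_Int_Un_disjoint:
  "finite N \<Longrightarrow> A \<inter> B = {} \<Longrightarrow> card (N \<inter> (A \<union> B)) = card (N \<inter> A) + card (N \<inter> B)"
  by (simp add: Int_Un_distrib card_Un_disjoint disjoint_iff)

lemma reduced_exists_other_unforced_edge:
  assumes "reduced V E c Fin Hs k" "X \<in> Hs" "e \<in> edges_in X E - Fin"
  shows "\<exists>e'\<in>edges_in X E - Fin. e' \<noteq> e"
proof (rule ccontr)
  assume "\<not> ?thesis"
  have "two_connected X (E - {e})"
    using assms unfolding reduced_def by blast
  moreover from \<open>\<not> ?thesis\<close> have "\<And>e'. e' \<in> E - {e} \<Longrightarrow> e' \<subseteq> X \<Longrightarrow> e' \<in> Fin"
    by (auto simp: edges_in_def)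
  ultimately have "two_connected X Fin"
    by (rule two_connected_mono)
  with assms(1,2) show False
    unfolding reduced_def by blast
qed

locale reduced_subcubic =
  fixes V :: "'a set" and E :: "'a set set" and c :: "'a set \<Rightarrow> nat"
    and Fin Hs :: "'a set set" and k :: int
  assumes simple: "simple_graph V E"
    and subcubic: "max_degree_le V E 3"
    and reduced: "reduced V E c Fin Hs k"
begin

lemma habitat_two_connected: "X \<in> Hs \<Longrightarrow> two_connected X E"
  using reduced unfolding reduced_def by blast

lemma card_edge: "e \<in> E \<Longrightarrow> card e = 2"
  using simple unfolding simple_graph_def by blast

lemma nbrs_subset_vertices: "nbrs E p \<subseteq> V"
  using simple unfolding simple_graph_def nbrs_def by blast

lemma finite_nbrs: "finite (nbrs E p)"
  using simple nbrs_subset_vertices unfolding simple_graph_def by (blast intro: finite_subset)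

lemma not_mem_nbrs_self: "p \<notin> nbrs E p"
  using card_edge[of "{p}"] by (auto simp: nbrs_def)

lemma card_nbrs_le_3: "card (nbrs E p) \<le> 3"
proof (cases "nbrs E p = {}")
  case False
  then have "p \<in> V"
    using simple unfolding simple_graph_def nbrs_def by blast
  have "finite E"
    using simple unfolding simple_graph_def by (blast intro: finite_subset[of E "Pow V"])
  have "card (nbrs E p) \<le> card {e \<in> E. p \<in> e}"
    by (rule card_inj_on_le[where f = "\<lambda>q. {p, q}"])
      (use \<open>finite E\<close> in \<open>auto simp: inj_on_def nbrs_def doubleton_eq_iff\<close>)
  with subcubic \<open>p \<in> V\<close> show ?thesis
    unfolding max_degree_le_def by fastforce
qed simp

lemma unforced_edge_endpoint_card_nbrs:
  assumes "X \<in> Hs" "{p, q} \<in> edges_in X E - Fin"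
  shows "3 \<le> card (nbrs E p \<inter> X)"
proof -
  have "two_connected X (E - {{p, q}})"
    using reduced assms unfolding reduced_def by blast
  with assms(2) show ?thesis
    by (intro card_nbrs_ge_3_if_two_connected_minus_edge) (auto simp: edges_in_def)
qed

lemma unforced_edge_endpoint_nbrs:
  assumes "X \<in> Hs" "{p, q} \<in> edges_in X E - Fin"
  shows "nbrs E p \<subseteq> X" and "card (nbrs E p) = 3"
proof -
  have "nbrs E p \<inter> X = nbrs E p"
    using unforced_edge_endpoint_card_nbrs[OF assms] card_nbrs_le_3[of p] finite_nbrs
    by (intro card_seteq) auto
  then show "nbrs E p \<subseteq> X"
    by blast
  show "card (nbrs E p) = 3"
    using unforced_edge_endpoint_card_nbrs[OF assms] card_nbrs_le_3[of p]
      \<open>nbrs E p \<inter> X = nbrs E p\<close> by simp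
qed

end

locale shared_unforced_edge = reduced_subcubic +
  fixes H H' :: "'a set" and u v :: 'a
  assumes habitats: "H \<in> Hs" "H' \<in> Hs"
    and unforced_edge: "{u, v} \<in> edges_in H E \<inter> edges_in H' E - Fin"
begin

abbreviation core :: "'a set" where
  "core \<equiv> H \<inter> H' - {u, v}"

lemma endpoints_mem: "u \<in> H \<inter> H'" "v \<in> H \<inter> H'"
  using unforced_edge by (auto simp: edges_in_def)

lemma u_ne_v: "u \<noteq> v"
  using unforced_edge card_edge[of "{u}"] by (auto simp: edges_in_def)

lemma finite_habitats: "finite H" "finite H'"
  using habitat_two_connected[OF habitats(1)] habitat_two_connected[OF habitats(2)]
  unfolding two_connected_def by auto

lemma nbrs_endpoint_subset: "nbrs E u \<subseteq> H \<inter> H'" "nbrs E v \<subseteq> H \<inter> H'"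
proof -
  have "{u, v} \<in> edges_in X E - Fin" "{v, u} \<in> edges_in X E - Fin" if "X \<in> {H, H'}" for X
    using unforced_edge that by (auto simp: insert_commute)
  then show "nbrs E u \<subseteq> H \<inter> H'" "nbrs E v \<subseteq> H \<inter> H'"
    using unforced_edge_endpoint_nbrs(1) habitats by (metis Int_subset_iff insertCI)+
qed

lemma card_nbrs_endpoint_core: "card (nbrs E u \<inter> core) = 2" "card (nbrs E v \<inter> core) = 2"
proof -
  have edges: "{u, v} \<in> edges_in H E - Fin" "{v, u} \<in> edges_in H E - Fin"
    using unforced_edge by (auto simp: insert_commute)
  have "nbrs E u \<inter> core = nbrs E u - {v}" "nbrs E v \<inter> core = nbrs E v - {u}"
    using nbrs_endpoint_subset not_mem_nbrs_self by auto
  moreover have "v \<in> nbrs E u" "u \<in> nbrs E v"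
    using unforced_edge by (auto simp: nbrs_def edges_in_def insert_commute)
  ultimately show "card (nbrs E u \<inter> core) = 2" "card (nbrs E v \<inter> core) = 2"
    using unforced_edge_endpoint_nbrs(2)[OF habitats(1) edges(1)]
      unforced_edge_endpoint_nbrs(2)[OF habitats(1) edges(2)] finite_nbrs by simp_all
qed

lemma card_Int_habitats: "card (H \<inter> H') = card core + 2"
  using endpoints_mem u_ne_v finite_habitats card_Diff_subset[of "{u, v}" "H \<inter> H'"]
    card_mono[of "H \<inter> H'" "{u, v}"] by auto

lemma two_le_sum_card_nbrs_core_exclusive:
  assumes "H - H' \<noteq> {}"
  shows "2 \<le> (\<Sum>t\<in>core. card (nbrs E t \<inter> (H - H')))"
proof -
  obtain a where "a \<in> H - H'"
    using assms by blast
  then obtain t1 t2 where t: "t1 \<noteq> t2" "t1 \<in> H \<inter> H'" "t2 \<in> H \<inter> H'"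
    "nbrs E t1 \<inter> (H - H') \<noteq> {}" "nbrs E t2 \<inter> (H - H') \<noteq> {}"
    using two_connected_two_exit_vertices[OF habitat_two_connected[OF habitats(1)], of a "H - H'" u v]
      endpoints_mem u_ne_v by auto
  moreover have "nbrs E u \<inter> (H - H') = {}" "nbrs E v \<inter> (H - H') = {}"
    using nbrs_endpoint_subset by auto
  ultimately have "t1 \<in> core" "t2 \<in> core"
    by auto
  moreover have "finite core" "finite (H - H')"
    using finite_habitats by auto
  ultimately show ?thesis
    using t(1,4,5) by (intro two_le_sum_card_nbrs_inter[of core "H - H'" t1 t2])
qed

lemma card_nbrs_core_vertex_split:
  assumes "t \<in> core"
  shows "card (nbrs E t \<inter> {u, v}) + card (nbrs E t \<inter> (H - H')) + card (nbrs E t \<inter> (H' - H))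
    + card (nbrs E t \<inter> core) \<le> 3"
proof -
  let ?N = "nbrs E t"
  have disjoint: "({u, v} \<union> (H - H') \<union> (H' - H)) \<inter> core = {}"
    "({u, v} \<union> (H - H')) \<inter> (H' - H) = {}" "{u, v} \<inter> (H - H') = {}"
    using endpoints_mem by auto
  have "card (?N \<inter> {u, v}) + card (?N \<inter> (H - H')) + card (?N \<inter> (H' - H)) + card (?N \<inter> core)
      = card (?N \<inter> ({u, v} \<union> (H - H') \<union> (H' - H) \<union> core))"
    by (simp only: card_Int_Un_disjoint[OF finite_nbrs] disjoint)
  also have "\<dots> \<le> card ?N"
    using finite_nbrs by (intro card_mono) auto
  also have "\<dots> \<le> 3"
    by (rule card_nbrs_le_3)
  finally show ?thesis .
qed

lemma exists_core_vertex_adjacent_to_all: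
  assumes "H - H' = {z}" "\<And>t. t \<in> core \<Longrightarrow> nbrs E t \<inter> core = {}"
  shows "\<exists>q\<in>core. {u, v, z} \<subseteq> nbrs E q"
proof -
  obtain e where e: "e \<in> edges_in H E - Fin" "e \<noteq> {u, v}"
    using reduced_exists_other_unforced_edge[OF reduced habitats(1)] unforced_edge by blast
  then have "card e = 2"
    using card_edge by (auto simp: edges_in_def)
  then obtain p q where pq: "e = {p, q}" "p \<noteq> q"
    by (meson card_2_iff)
  have "{u, z} \<notin> E" "{v, z} \<notin> E"
    using nbrs_endpoint_subset assms(1) by (auto simp: nbrs_def)
  moreover have "p \<in> H" "q \<in> H" "{p, q} \<in> E"
    using e pq by (auto simp: edges_in_def)
  ultimately have "p \<in> core \<or> q \<in> core"
    using pq e(2) assms(1) by (auto simp: insert_commute)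
  moreover have "{p, q} \<in> edges_in H E - Fin" "{q, p} \<in> edges_in H E - Fin"
    using e pq by (auto simp: insert_commute)
  then have "3 \<le> card (nbrs E p \<inter> H)" "3 \<le> card (nbrs E q \<inter> H)"
    using unforced_edge_endpoint_card_nbrs[OF habitats(1)] by blast+
  ultimately obtain r where r: "r \<in> core" "3 \<le> card (nbrs E r \<inter> H)"
    by blast
  have "nbrs E r \<inter> H \<subseteq> {u, v, z}"
    using assms(1) assms(2)[OF r(1)] by blast
  then have "nbrs E r \<inter> H = {u, v, z}"
    using r(2) by (intro card_seteq) (auto simp: card_insert_if)
  with r(1) show ?thesis
    by blast
qed

lemma nbrs_endpoint_core_eq:
  assumes "x \<in> {u, v}" "q \<in> core" "q' \<in> core" "q \<noteq> q'" "x \<in> nbrs E q" "x \<in> nbrs E q'"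
  shows "nbrs E x \<inter> core = {q, q'}"
proof (rule card_seteq[symmetric])
  show "{q, q'} \<subseteq> nbrs E x \<inter> core"
    using assms(2-6) mem_nbrs_commute[of x E] by blast
  show "card (nbrs E x \<inter> core) \<le> card {q, q'}"
    using assms(1,4) card_nbrs_endpoint_core by auto
qed (use finite_nbrs in blast)

sublocale swap: shared_unforced_edge V E c Fin Hs k H' H u v
  using habitats unforced_edge by unfold_locales auto

lemma core_capacity:
  assumes "H - H' \<noteq> {}" "H' - H \<noteq> {}"
  shows "8 + (\<Sum>t\<in>core. card (nbrs E t \<inter> core)) \<le> 3 * card core"
proof -
  have "finite core"
    using finite_habitats by blast
  have "(\<Sum>t\<in>core. card (nbrs E t \<inter> {u, v})) = (\<Sum>x\<in>{u, v}. card (nbrs E x \<inter> core))"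
    using \<open>finite core\<close> by (simp add: sum_card_nbrs_inter_commute)
  also have "\<dots> = 4"
    using u_ne_v card_nbrs_endpoint_core by simp
  finally have "(\<Sum>t\<in>core. card (nbrs E t \<inter> {u, v})) = 4" .
  moreover have "2 \<le> (\<Sum>t\<in>core. card (nbrs E t \<inter> (H - H')))"
    using two_le_sum_card_nbrs_core_exclusive assms(1) .
  moreover have "2 \<le> (\<Sum>t\<in>core. card (nbrs E t \<inter> (H' - H)))"
    using swap.two_le_sum_card_nbrs_core_exclusive assms(2) by (simp add: Int_commute)
  moreover have "(\<Sum>t\<in>core. card (nbrs E t \<inter> {u, v}) + card (nbrs E t \<inter> (H - H'))
      + card (nbrs E t \<inter> (H' - H)) + card (nbrs E t \<inter> core)) \<le> (\<Sum>t\<in>core. 3)"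
    using card_nbrs_core_vertex_split by (rule sum_mono)
  ultimately show ?thesis
    by (simp add: sum.distrib)
qed

lemma core_has_internal_edge:
  assumes "H - H' = {z}" "H' - H = {w}" "card core = 3"
  shows "\<exists>t\<in>core. nbrs E t \<inter> core \<noteq> {}"
proof (rule ccontr)
  assume "\<not> ?thesis"
  then have no_internal: "\<And>t. t \<in> core \<Longrightarrow> nbrs E t \<inter> core = {}"
    by blast
  obtain q where q: "q \<in> core" "{u, v, z} \<subseteq> nbrs E q"
    using exists_core_vertex_adjacent_to_all[OF assms(1) no_internal] by blast
  obtain q' where q': "q' \<in> core" "{u, v, w} \<subseteq> nbrs E q'"
    using swap.exists_core_vertex_adjacent_to_all[OF assms(2)] no_internal by (auto simp: Int_commute)
  have "q \<noteq> q'"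
  proof
    assume "q = q'"
    with q q' have "{u, v, z, w} \<subseteq> nbrs E q"
      by blast
    then have "card {u, v, z, w} \<le> card (nbrs E q)"
      by (rule card_mono[OF finite_nbrs])
    moreover have "z \<in> H - H'" "w \<in> H' - H"
      using assms(1,2) by auto
    then have "z \<noteq> u" "z \<noteq> v" "w \<noteq> u" "w \<noteq> v" "z \<noteq> w"
      using endpoints_mem by auto
    then have "card {u, v, z, w} = 4"
      using u_ne_v by simp
    ultimately show False
      using card_nbrs_le_3[of q] by linarith
  qed
  have "nbrs E x \<inter> core = {q, q'}" if "x \<in> {u, v}" for x
    using nbrs_endpoint_core_eq[OF that q(1) q'(1) \<open>q \<noteq> q'\<close>] that q q' by auto
  moreover have "\<not> core \<subseteq> {q, q'}"
  proof
    assume "core \<subseteq> {q, q'}"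
    then have "card core \<le> card {q, q'}"
      by (rule card_mono[rotated]) simp
    with assms(3) \<open>q \<noteq> q'\<close> show False
      by simp
  qed
  then obtain r where r: "r \<in> core" "r \<notin> {q, q'}"
    by blast
  ultimately have "u \<notin> nbrs E r" "v \<notin> nbrs E r"
    using mem_nbrs_commute[of _ E r] by blast+
  then have "nbrs E r \<inter> H \<subseteq> {z}"
    using assms(1) no_internal[OF r(1)] by blast
  then have "card (nbrs E r \<inter> H) \<le> 1"
    using card_mono[of "{z}"] by fastforce
  moreover have "2 \<le> card (nbrs E r \<inter> H)"
    using r(1) two_connected_card_nbrs_ge_2[OF habitat_two_connected[OF habitats(1)]] by blast
  ultimately show False
    by linarith
qed

theorem subset_if_card_eq_6:
  assumes "card H = 6" "card H' \<le> 6"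
  shows "H' \<subseteq> H"
proof (rule ccontr)
  assume "\<not> H' \<subseteq> H"
  then obtain w where w: "w \<in> H' - H"
    by blast
  have "\<not> H \<subseteq> H'"
  proof
    assume "H \<subseteq> H'"
    with w have "card H < card H'"
      using psubset_card_mono[OF finite_habitats(2)] by blast
    with assms show False
      by simp
  qed
  then obtain z where z: "z \<in> H - H'"
    by blast
  have "card (insert z (H \<inter> H')) \<le> card H"
    using z finite_habitats by (intro card_mono) auto
  then have "card core \<le> 3"
    using z finite_habitats assms(1) card_Int_habitats by simp
  moreover have "8 + (\<Sum>t\<in>core. card (nbrs E t \<inter> core)) \<le> 3 * card core"
    using core_capacity z w by blast
  ultimately have "card core = 3" and internal: "(\<Sum>t\<in>core. card (nbrs E t \<inter> core)) \<le> 1"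
    by linarith+
  have "card (H - H') = 1" "card (H' - H) \<le> 1"
    using assms finite_habitats card_Int_habitats \<open>card core = 3\<close>
      card_Diff_subset_Int[of H H'] card_Diff_subset_Int[of H' H]
    by (simp_all add: Int_commute)
  then have "H - H' = {z}" "H' - H = {w}"
    using z w finite_habitats
    by (auto simp: card_le_Suc0_iff_eq card_1_singleton_iff dest!: equalityD1)
  then obtain t t' where t: "t \<in> core" "t' \<in> core" "t' \<in> nbrs E t"
    using core_has_internal_edge \<open>card core = 3\<close> by blast
  then have "2 \<le> (\<Sum>t\<in>core. card (nbrs E t \<inter> core))"
    using finite_habitats not_mem_nbrs_self mem_nbrs_commute[of t' E t]
    by (intro two_le_sum_card_nbrs_inter[of core core t t']) auto
  with internal show False
    by linarith
qed

end

theorem lemma15: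
  fixes V :: "'a set" and E Fin Hs :: "'a set set" and c :: "'a set \<Rightarrow> nat" and k :: int
    and H H' :: "'a set"
  assumes "rgbp_instance V E c Fin Hs k"
    and "reduced V E c Fin Hs k"
    and "\<forall>X\<in>Hs. card X \<le> 6"
    and "max_degree_le V E 3"
    and "H \<in> Hs" and "card H = 6"
    and "H' \<in> Hs" and "habitat_graph_edge E Fin Hs H H'"
  shows "H' \<subseteq> H"
proof -
  interpret reduced_subcubic V E c Fin Hs k
    using assms(1,2,4) unfolding rgbp_instance_def by unfold_locales auto
  obtain e where e: "e \<in> edges_in H E \<inter> edges_in H' E - Fin"
    using assms(8) unfolding habitat_graph_edge_def by blast
  then have "card e = 2"
    using card_edge by (auto simp: edges_in_def)
  then obtain u v where "e = {u, v}"
    by (meson card_2_iff)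
  with e interpret shared_unforced_edge V E c Fin Hs k H H' u v
    using assms(5,7) by unfold_locales auto
  show ?thesis
    using subset_if_card_eq_6 assms(3,6,7) by blast
qed

end
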